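(* Let $n_1,n_2,n_3$ be integers with $3\le n_1,n_2\le n_3$ and $3\max(n_1,n_2)\le 2n_3\le n_1n_2$. Let $W$ be any set produced by the Middle Cone Construction described below and $u=(n_1+1,n_2+1,n_3+1)$. Then $W$ is a total-dominating set of $K_{n_1}\times K_{n_2}\times K_{n_3}$, and $W\cup\{u\}$ is a total-dominating set of $K_{n_1+1}\times K_{n_2+1}\times K_{n_3+1}$.
   Context: $K_{m_1}\times K_{m_2}\times K_{m_3}$: vertices are triples $(x_1,x_2,x_3)$, $1\le x_i\le m_i$, adjacent iff they differ in every coordinate. A total-dominating set is a vertex set $D$ such that every vertex of the graph is adjacent to some vertex of $D$. Multiplicities: write $n_3=qn_1+r$, $0\le r\le n_1-1$. If $r\le n_1-r$, $(\ell_1,\dots,\ell_{n_1})$ is $(q+1,q)$ repeated $r$ times followed by $n_1-2r$ copies of $q$; if $r>n_1-r$, it is $(q+1,q)$ repeated $n_1-r$ times followed by $2r-n_1$ copies of $q+1$. Let $L_i=\sum_{j<i}\ell_j$; block $i$ is the set of columns $c$ with $L_i<c\le L_i+\ell_i$; $s_i=L_i+1$. Middle Cone Construction: $W=W^L\cup W^R$, each consisting of $n_3$ landmarks indexed by columns $c=1,\dots,n_3$. Left column $c$ in block $i$ is $(i,y^L_c,c)$; right column $c$ in block $i$ is $(i+1,y^R_c,c)$ with $n_1+1$ read as $1$. Even $n_2$, $h=n_2/2$: $y^L_c=((c-1)\bmod h)+1$, $y^R_c=h+((c-1)\bmod h)+1$. Odd $n_2$, $f=(n_2-1)/2$, $k=\#\{i:\ell_i>f\}$: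 let $S=\{s_i:\ell_i>f\}$ if $k\ge2$ and $S=\{1\}$ if $k\le1$. Set $y^L_c=n_2$ for $c\in S$ and fill the other left columns in increasing order with $1,\dots,f,1,\dots,f,\dots$; set $y^R_c=n_2$ for $c\in S+1$ and fill the other right columns in increasing order with $f+1,\dots,2f,f+1,\dots,2f,\dots$. If $k\le1$, additionally change one left landmark of the form $(x,1,z)$ with $x\notin\{1,2,n_1\}$ to $(x,n_2,z)$ (any such choice). *)

theory Defs
  imports Main
begin

type_synonym vtx = "nat \<times> nat \<times> nat"

definition vert :: "nat \<Rightarrow> nat \<Rightarrow> nat \<Rightarrow> vtx set" where
  "vert m1 m2 m3 = {(x1, x2, x3). 1 \<le> x1 \<and> x1 \<le> m1 \<and> 1 \<le> x2 \<and> x2 \<le> m2 \<and> 1 \<le> x3 \<and> x3 \<le> m3}"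

definition adj :: "vtx \<Rightarrow> vtx \<Rightarrow> bool" where
  "adj x y \<longleftrightarrow> fst x \<noteq> fst y \<and> fst (snd x) \<noteq> fst (snd y) \<and> snd (snd x) \<noteq> snd (snd y)"

definition total_dom :: "nat \<Rightarrow> nat \<Rightarrow> nat \<Rightarrow> vtx set \<Rightarrow> bool" where
  "total_dom m1 m2 m3 D \<longleftrightarrow> D \<subseteq> vert m1 m2 m3 \<and> (\<forall>v \<in> vert m1 m2 m3. \<exists>d \<in> D. adj v d)"

definition mult :: "nat \<Rightarrow> nat \<Rightarrow> nat \<Rightarrow> nat" where
  "mult n1 n3 i = (let q = n3 div n1; r = n3 mod n1 in
     if r \<le> n1 - r then (if i \<le> 2 * r \<and> odd i then q + 1 else q)
     else (if i \<le> 2 * (n1 - r) then (if odd i then q + 1 else q) else q + 1))"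

definition Lpre :: "nat \<Rightarrow> nat \<Rightarrow> nat \<Rightarrow> nat" where
  "Lpre n1 n3 i = (\<Sum>j\<in>{1..<i}. mult n1 n3 j)"

definition blk :: "nat \<Rightarrow> nat \<Rightarrow> nat \<Rightarrow> nat" where
  "blk n1 n3 c = (THE i. i \<in> {1..n1} \<and> Lpre n1 n3 i < c \<and> c \<le> Lpre n1 n3 i + mult n1 n3 i)"

definition bstart :: "nat \<Rightarrow> nat \<Rightarrow> nat \<Rightarrow> nat" where
  "bstart n1 n3 i = Lpre n1 n3 i + 1"

definition landmarks :: "nat \<Rightarrow> nat \<Rightarrow> (nat \<Rightarrow> nat) \<Rightarrow> (nat \<Rightarrow> nat) \<Rightarrow> vtx set" where
  "landmarks n1 n3 yL yR =
     (\<lambda>c. (blk n1 n3 c, yL c, c)) ` {1..n3} \<union>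
     (\<lambda>c. (blk n1 n3 c mod n1 + 1, yR c, c)) ` {1..n3}"

definition yL_even :: "nat \<Rightarrow> nat \<Rightarrow> nat" where
  "yL_even n2 c = ((c - 1) mod (n2 div 2)) + 1"

definition yR_even :: "nat \<Rightarrow> nat \<Rightarrow> nat" where
  "yR_even n2 c = n2 div 2 + ((c - 1) mod (n2 div 2)) + 1"

definition kcnt :: "nat \<Rightarrow> nat \<Rightarrow> nat \<Rightarrow> nat" where
  "kcnt n1 n2 n3 = card {i \<in> {1..n1}. mult n1 n3 i > (n2 - 1) div 2}"

definition Sset :: "nat \<Rightarrow> nat \<Rightarrow> nat \<Rightarrow> nat set" where
  "Sset n1 n2 n3 = (if kcnt n1 n2 n3 \<ge> 2
     then {bstart n1 n3 i | i. i \<in> {1..n1} \<and> mult n1 n3 i > (n2 - 1) div 2}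
     else {1})"

definition yL_odd :: "nat \<Rightarrow> nat \<Rightarrow> nat \<Rightarrow> nat \<Rightarrow> nat" where
  "yL_odd n1 n2 n3 c = (if c \<in> Sset n1 n2 n3 then n2
     else card {c' \<in> {1..<c}. c' \<notin> Sset n1 n2 n3} mod ((n2 - 1) div 2) + 1)"

definition yR_odd :: "nat \<Rightarrow> nat \<Rightarrow> nat \<Rightarrow> nat \<Rightarrow> nat" where
  "yR_odd n1 n2 n3 c = (if c \<in> (\<lambda>s. s + 1) ` Sset n1 n2 n3 then n2
     else (n2 - 1) div 2
          + card {c' \<in> {1..<c}. c' \<notin> (\<lambda>s. s + 1) ` Sset n1 n2 n3} mod ((n2 - 1) div 2) + 1)"

definition middle_cone :: "nat \<Rightarrow> nat \<Rightarrow> nat \<Rightarrow> vtx set \<Rightarrow> bool" where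
  "middle_cone n1 n2 n3 W \<longleftrightarrow>
     (if even n2 then W = landmarks n1 n3 (yL_even n2) (yR_even n2)
      else if kcnt n1 n2 n3 \<ge> 2 then W = landmarks n1 n3 (yL_odd n1 n2 n3) (yR_odd n1 n2 n3)
      else (\<exists>z \<in> {1..n3}. yL_odd n1 n2 n3 z = 1 \<and> blk n1 n3 z \<notin> {1, 2, n1} \<and>
              W = landmarks n1 n3 ((yL_odd n1 n2 n3)(z := n2)) (yR_odd n1 n2 n3)))"

end

theory Submission
  imports Defs
begin

(* Call the first coordinate the row, the second the height and the third the column.  The two
   landmarks of a column c in block i lie in row i (left) and row i + 1 (right, cyclically).
   Hence the left landmarks of three columns taken from the blocks 1, 2, n1 lie in three distinct
   rows and columns, and so do the right ones (rows 2, 3, 1).  If their heights all differ from b,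
   every vertex (a, b, c) is adjacent to one of them, since a shares the row of at most one and c
   the column of at most one.  In every case of the construction the left heights lie in {1..m}
   or equal n2 and the right heights lie in {m+1..n2}; so for b <= m the right side works, for
   m < b < n2 the left side works, and for b = n2 the blocks 1, 2, n1 still contain left
   landmarks below n2.  In the bigger graph, u is adjacent to every old vertex, and a vertex with
   some coordinates n_i + 1 is dominated by any neighbour in W of the old vertex obtained by
   replacing those coordinates by 1. *)

lemma mult_ge_quotient: "0 < n1 \<Longrightarrow> n3 div n1 \<le> mult n1 n3 i"
  by (simp add: mult_def Let_def)

lemma mult_pos: "0 < n1 \<Longrightarrow> n1 \<le> n3 \<Longrightarrow> 0 < mult n1 n3 i"
  using mult_ge_quotient[of n1 n3 i] div_le_mono[of n1 n3 n1] by simp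

lemma mult_first_ge_2:
  assumes "0 < n1" "n1 < n3"
  shows "2 \<le> mult n1 n3 1"
proof (cases "n3 mod n1 = 0")
  case True
  then have "n3 = n1 * (n3 div n1)" by (simp add: mod_eq_0_iff_dvd)
  with assms have "n1 * 1 < n1 * (n3 div n1)" by simp
  then have "2 \<le> n3 div n1" by (simp only: mult_less_cancel1) simp
  then show ?thesis using mult_ge_quotient[OF assms(1)] le_trans by blast
next
  case False
  have "1 \<le> n3 div n1" using assms div_le_mono[of n1 n3 n1] by simp
  with False show ?thesis by (auto simp: mult_def Let_def)
qed

lemma card_odd_atLeastAtMost_double: "card {j \<in> {1..2*r}. odd j} = (r::nat)"
proof -
  have "{j \<in> {1..2*r}. odd j} = (\<lambda>i. 2*i + 1) ` {..<r}"
    by (auto elim!: oddE simp: image_iff)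
  then show ?thesis by (simp add: card_image inj_on_def)
qed

lemma card_even_atLeastAtMost_double: "card {j \<in> {1..2*r}. even j} = (r::nat)"
proof -
  have "{j \<in> {1..2*r}. even j} = (\<lambda>i. 2*i) ` {1..r}"
    by (auto elim!: evenE simp: image_iff)
  then show ?thesis by (simp add: card_image inj_on_def)
qed

lemma Lpre_Suc: "1 \<le> i \<Longrightarrow> Lpre n1 n3 (Suc i) = Lpre n1 n3 i + mult n1 n3 i"
  by (simp add: Lpre_def)

lemma Lpre_le_1 [simp]: "i \<le> 1 \<Longrightarrow> Lpre n1 n3 i = 0"
  by (simp add: Lpre_def)

lemma Lpre_mono: "i \<le> j \<Longrightarrow> Lpre n1 n3 i \<le> Lpre n1 n3 j"
  unfolding Lpre_def by (rule sum_mono2) auto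

lemma Lpre_end_le: "1 \<le> i \<Longrightarrow> i < j \<Longrightarrow> Lpre n1 n3 i + mult n1 n3 i \<le> Lpre n1 n3 j"
  using Lpre_Suc[of i n1 n3] Lpre_mono[of "Suc i" j n1 n3] by simp

lemma Lpre_last:
  assumes "0 < n1"
  shows "Lpre n1 n3 (n1 + 1) = n3"
proof -
  define q where "q = n3 div n1"
  define r where "r = n3 mod n1"
  have n3: "n3 = n1 * q + r" and "r < n1"
    using assms unfolding q_def r_def by simp_all
  have Lpre: "Lpre n1 n3 (n1 + 1) = (\<Sum>j\<in>{1..n1}. mult n1 n3 j)"
    unfolding Lpre_def by (simp add: atLeastLessThanSuc_atLeastAtMost)
  show ?thesis
  proof (cases "r \<le> n1 - r")
    case True
    have "mult n1 n3 j = q + of_bool (j \<le> 2*r \<and> odd j)" for j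
      using True unfolding mult_def Let_def q_def[symmetric] r_def[symmetric] by simp
    then have "Lpre n1 n3 (n1 + 1) = n1 * q + card ({1..n1} \<inter> {j. j \<le> 2*r \<and> odd j})"
      unfolding Lpre by (simp add: sum.distrib)
    also have "{1..n1} \<inter> {j. j \<le> 2*r \<and> odd j} = {j \<in> {1..2*r}. odd j}"
      using True by auto
    finally show ?thesis using n3 card_odd_atLeastAtMost_double[of r] by simp
  next
    case False
    define s where "s = n1 - r"
    have "mult n1 n3 j + of_bool (j \<le> 2*s \<and> even j) = q + 1" for j
      using False unfolding mult_def Let_def q_def[symmetric] r_def[symmetric] s_def by (auto split: if_splits)
    then have "(\<Sum>j\<in>{1..n1}. mult n1 n3 j + of_bool (j \<le> 2*s \<and> even j)) = n1 * (q + 1)"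
      by simp
    then have "Lpre n1 n3 (n1 + 1) + card ({1..n1} \<inter> {j. j \<le> 2*s \<and> even j}) = n1 * (q + 1)"
      unfolding Lpre by (simp add: sum.distrib)
    also have "{1..n1} \<inter> {j. j \<le> 2*s \<and> even j} = {j \<in> {1..2*s}. even j}"
      using False unfolding s_def by (auto split: if_splits)
    finally show ?thesis using n3 \<open>r < n1\<close> card_even_atLeastAtMost_double[of s]
      unfolding s_def by (simp add: algebra_simps)
  qed
qed

lemma blk_eq:
  assumes "i \<in> {1..n1}" "Lpre n1 n3 i < c" "c \<le> Lpre n1 n3 i + mult n1 n3 i"
  shows "blk n1 n3 c = i"
  unfolding blk_def
proof (rule the_equality)
  fix j assume j: "j \<in> {1..n1} \<and> Lpre n1 n3 j < c \<and> c \<le> Lpre n1 n3 j + mult n1 n3 j"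
  show "j = i"
    using Lpre_end_le[of j i n1 n3] Lpre_end_le[of i j n1 n3] j assms
    by (cases i j rule: linorder_cases) auto
qed (use assms in simp)

lemma blk_range:
  assumes "0 < n1" "c \<in> {1..n3}"
  shows "blk n1 n3 c \<in> {1..n1}"
proof -
  have "\<exists>k\<le>n1 + 1. (\<forall>i<k. \<not> c \<le> Lpre n1 n3 i) \<and> c \<le> Lpre n1 n3 k"
    by (rule ex_least_nat_le) (use Lpre_last[OF assms(1), of n3] assms(2) in auto)
  then obtain k where k: "k \<le> n1 + 1" "\<forall>i<k. \<not> c \<le> Lpre n1 n3 i" "c \<le> Lpre n1 n3 k"
    by blast
  moreover have "1 < k" using k(3) assms(2) by (cases "k \<le> 1") auto
  ultimately obtain i where "k = Suc i" "i \<in> {1..n1}" "Lpre n1 n3 i < c"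
    by (cases k) auto
  then show ?thesis using k(3) Lpre_Suc[of i n1 n3] blk_eq[of i n1 n3 c] by auto
qed

lemma bstart_add_column:
  assumes "0 < n1" "i \<in> {1..n1}" "k < mult n1 n3 i"
  shows "bstart n1 n3 i + k \<in> {1..n3} \<and> blk n1 n3 (bstart n1 n3 i + k) = i"
proof -
  have "Lpre n1 n3 i + mult n1 n3 i \<le> Lpre n1 n3 (n1 + 1)"
    using Lpre_end_le[of i "n1 + 1" n1 n3] assms(2) by simp
  then show ?thesis
    using Lpre_last[OF assms(1), of n3] blk_eq[OF assms(2), of n3 "bstart n1 n3 i + k"] assms(3)
    unfolding bstart_def by auto
qed

lemma bstart_column:
  "0 < n1 \<Longrightarrow> n1 \<le> n3 \<Longrightarrow> i \<in> {1..n1} \<Longrightarrow>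
    bstart n1 n3 i \<in> {1..n3} \<and> blk n1 n3 (bstart n1 n3 i) = i"
  using bstart_add_column[of n1 i 0 n3] mult_pos[of n1 n3 i] by simp

lemma ex_adj_of_three:
  assumes "(x1, y1, z1) \<in> W" "(x2, y2, z2) \<in> W" "(x3, y3, z3) \<in> W"
    and "x1 \<noteq> x2" "x1 \<noteq> x3" "x2 \<noteq> x3" "z1 \<noteq> z2" "z1 \<noteq> z3" "z2 \<noteq> z3"
    and "y1 \<noteq> b" "y2 \<noteq> b" "y3 \<noteq> b"
  shows "\<exists>w \<in> W. adj (a, b, c) w"
proof -
  have "adj (a, b, c) (x1, y1, z1) \<or> adj (a, b, c) (x2, y2, z2) \<or> adj (a, b, c) (x3, y3, z3)"
    using assms(4-) unfolding adj_def by auto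
  then show ?thesis using assms(1-3) by blast
qed

definition blocks_avoid :: "nat \<Rightarrow> nat \<Rightarrow> (nat \<Rightarrow> nat) \<Rightarrow> nat \<Rightarrow> bool" where
  "blocks_avoid n1 n3 y b \<longleftrightarrow> (\<forall>t \<in> {1, 2, n1}. \<exists>c \<in> {1..n3}. blk n1 n3 c = t \<and> y c \<noteq> b)"

lemma blocks_avoidE:
  assumes "blocks_avoid n1 n3 y b"
  obtains c1 c2 c3 where "c1 \<in> {1..n3}" "c2 \<in> {1..n3}" "c3 \<in> {1..n3}"
    "blk n1 n3 c1 = 1" "blk n1 n3 c2 = 2" "blk n1 n3 c3 = n1" "y c1 \<noteq> b" "y c2 \<noteq> b" "y c3 \<noteq> b"
  using assms unfolding blocks_avoid_def by (simp only: ball_simps) blast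

lemma left_landmark: "c \<in> {1..n3} \<Longrightarrow> (blk n1 n3 c, yL c, c) \<in> landmarks n1 n3 yL yR"
  unfolding landmarks_def by blast

lemma right_landmark: "c \<in> {1..n3} \<Longrightarrow> (blk n1 n3 c mod n1 + 1, yR c, c) \<in> landmarks n1 n3 yL yR"
  unfolding landmarks_def by blast

lemma landmarks_subset_vert:
  assumes "0 < n1" "\<forall>c. yL c \<in> {1..n2} \<and> yR c \<in> {1..n2}"
  shows "landmarks n1 n3 yL yR \<subseteq> vert n1 n2 n3"
proof
  fix w assume "w \<in> landmarks n1 n3 yL yR"
  then obtain c where c: "c \<in> {1..n3}"
    and "w = (blk n1 n3 c, yL c, c) \<or> w = (blk n1 n3 c mod n1 + 1, yR c, c)"
    unfolding landmarks_def by blast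
  moreover have "blk n1 n3 c \<in> {1..n1}" "blk n1 n3 c mod n1 + 1 \<le> n1"
    using blk_range[OF assms(1) c] mod_less_divisor[OF assms(1)] by (simp_all add: Suc_le_eq)
  ultimately show "w \<in> vert n1 n2 n3" using assms(2) unfolding vert_def by auto
qed

lemma landmarks_adj:
  assumes "3 \<le> n1" "blocks_avoid n1 n3 yL b \<or> blocks_avoid n1 n3 yR b"
  shows "\<exists>w \<in> landmarks n1 n3 yL yR. adj (a, b, c) w"
  using assms(2)
proof
  assume "blocks_avoid n1 n3 yL b"
  then obtain c1 c2 c3 where c: "c1 \<in> {1..n3}" "c2 \<in> {1..n3}" "c3 \<in> {1..n3}"
    "blk n1 n3 c1 = 1" "blk n1 n3 c2 = 2" "blk n1 n3 c3 = n1" "yL c1 \<noteq> b" "yL c2 \<noteq> b" "yL c3 \<noteq> b"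
    by (rule blocks_avoidE)
  have "c1 \<noteq> c2" "c1 \<noteq> c3" "c2 \<noteq> c3" using c(4-6) assms(1) by auto
  with c show ?thesis
    using ex_adj_of_three[OF left_landmark[OF c(1)] left_landmark[OF c(2)] left_landmark[OF c(3)]]
      assms(1) by simp
next
  assume "blocks_avoid n1 n3 yR b"
  then obtain c1 c2 c3 where c: "c1 \<in> {1..n3}" "c2 \<in> {1..n3}" "c3 \<in> {1..n3}"
    "blk n1 n3 c1 = 1" "blk n1 n3 c2 = 2" "blk n1 n3 c3 = n1" "yR c1 \<noteq> b" "yR c2 \<noteq> b" "yR c3 \<noteq> b"
    by (rule blocks_avoidE)
  have "1 mod n1 + 1 = 2" "2 mod n1 + 1 = 3" "n1 mod n1 + 1 = 1" using assms(1) by auto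
  then have "(2, yR c1, c1) \<in> landmarks n1 n3 yL yR" "(3, yR c2, c2) \<in> landmarks n1 n3 yL yR"
    "(1, yR c3, c3) \<in> landmarks n1 n3 yL yR"
    using right_landmark[of _ n3 n1 yR yL] c(1-6) by metis+
  moreover have "c1 \<noteq> c2" "c1 \<noteq> c3" "c2 \<noteq> c3" using c(4-6) assms(1) by auto
  ultimately show ?thesis using ex_adj_of_three c(7-) by simp
qed

lemma total_dom_insert_corner:
  assumes dom: "total_dom n1 n2 n3 D" and pos: "0 < n1" "0 < n2" "0 < n3"
  shows "total_dom (n1 + 1) (n2 + 1) (n3 + 1) (insert (n1 + 1, n2 + 1, n3 + 1) D)"
  unfolding total_dom_def
proof (intro conjI ballI)
  show "insert (n1 + 1, n2 + 1, n3 + 1) D \<subseteq> vert (n1 + 1) (n2 + 1) (n3 + 1)"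
    using dom unfolding total_dom_def vert_def by auto
next
  fix v assume v: "v \<in> vert (n1 + 1) (n2 + 1) (n3 + 1)"
  obtain a b c where abc: "v = (a, b, c)" by (cases v)
  show "\<exists>d \<in> insert (n1 + 1, n2 + 1, n3 + 1) D. adj v d"
  proof (cases "a \<le> n1 \<and> b \<le> n2 \<and> c \<le> n3")
    case True
    then show ?thesis unfolding abc adj_def by auto
  next
    case False
    define v' where "v' = (if a \<le> n1 then a else 1, if b \<le> n2 then b else 1, if c \<le> n3 then c else 1)"
    have "v' \<in> vert n1 n2 n3" using v pos unfolding v'_def abc vert_def by auto
    then obtain d where d: "d \<in> D" "adj v' d" using dom unfolding total_dom_def by blast
    then have "d \<in> vert n1 n2 n3" using dom unfolding total_dom_def by blast
    then have "adj v d" using d(2) v unfolding v'_def abc adj_def vert_def by (auto split: if_splits)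
    then show ?thesis using d(1) by blast
  qed
qed

lemma blocks_avoid_if_never:
  assumes "3 \<le> n1" "n1 \<le> n3" "\<forall>c. y c \<noteq> b"
  shows "blocks_avoid n1 n3 y b"
  unfolding blocks_avoid_def
proof
  fix t assume "t \<in> {1, 2, n1}"
  then have "t \<in> {1..n1}" using assms(1) by auto
  then show "\<exists>c \<in> {1..n3}. blk n1 n3 c = t \<and> y c \<noteq> b"
    using bstart_column[of n1 n3 t] assms by auto
qed

lemma landmarks_total_dom:
  assumes "3 \<le> n1" "n1 \<le> n3" "m \<le> n2"
    and low: "\<forall>c. yL c \<in> {1..m} \<union> {n2}" and high: "\<forall>c. yR c \<in> {m<..n2}"
    and top: "blocks_avoid n1 n3 yL n2"
  shows "total_dom n1 n2 n3 (landmarks n1 n3 yL yR)"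
proof -
  have avoid: "blocks_avoid n1 n3 yL b \<or> blocks_avoid n1 n3 yR b" for b
  proof (cases "b \<le> m")
    case True
    then have "\<forall>c. yR c \<noteq> b" using high by (metis greaterThanAtMost_iff leD)
    then show ?thesis using blocks_avoid_if_never assms(1,2) by blast
  next
    case False
    then have "b \<noteq> n2 \<Longrightarrow> \<forall>c. yL c \<noteq> b" using low by (metis Un_iff atLeastAtMost_iff singletonD)
    then show ?thesis using blocks_avoid_if_never assms(1,2) top by blast
  qed
  have "\<forall>c. yL c \<in> {1..n2} \<and> yR c \<in> {1..n2}"
  proof
    fix c show "yL c \<in> {1..n2} \<and> yR c \<in> {1..n2}"
      using low[rule_format, of c] high[rule_format, of c] assms(3) by auto
  qed
  then have "landmarks n1 n3 yL yR \<subseteq> vert n1 n2 n3"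
    using landmarks_subset_vert assms(1) by simp
  moreover have "\<exists>w \<in> landmarks n1 n3 yL yR. adj v w" for v
    using landmarks_adj[OF assms(1) avoid] by (cases v) simp
  ultimately show ?thesis unfolding total_dom_def by blast
qed

lemma yL_even_bounds: "0 < n2 div 2 \<Longrightarrow> yL_even n2 c \<in> {1..n2 div 2}"
  using mod_less_divisor[of "n2 div 2" "c - 1"] unfolding yL_even_def by (simp del: mod_less_divisor)

lemma yR_even_bounds: "0 < n2 div 2 \<Longrightarrow> yR_even n2 c \<in> {n2 div 2<..2 * (n2 div 2)}"
  using mod_less_divisor[of "n2 div 2" "c - 1"] unfolding yR_even_def by (simp del: mod_less_divisor)

lemma yL_odd_bounds:
  "3 \<le> n2 \<Longrightarrow> c \<notin> Sset n1 n2 n3 \<Longrightarrow> yL_odd n1 n2 n3 c \<in> {1..(n2 - 1) div 2}"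
  unfolding yL_odd_def by (simp add: Suc_leI)

lemma yR_odd_bounds:
  "3 \<le> n2 \<Longrightarrow> c \<notin> Suc ` Sset n1 n2 n3 \<Longrightarrow>
    yR_odd n1 n2 n3 c \<in> {(n2 - 1) div 2<..2 * ((n2 - 1) div 2)}"
  unfolding yR_odd_def by (simp add: Suc_leI)

lemma Sset_block_starts:
  assumes "s \<in> Sset n1 n2 n3" "2 \<le> kcnt n1 n2 n3"
  obtains i where "i \<in> {1..n1}" "(n2 - 1) div 2 < mult n1 n3 i" "s = bstart n1 n3 i"
  using assms unfolding Sset_def by auto

lemma block_has_column_outside_Sset:
  assumes "0 < n1" "n1 \<le> n3" "3 \<le> n2" "2 \<le> kcnt n1 n2 n3" "t \<in> {1..n1}"
  shows "\<exists>c \<in> {1..n3}. blk n1 n3 c = t \<and> c \<notin> Sset n1 n2 n3"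
proof (cases "(n2 - 1) div 2 < mult n1 n3 t")
  case True
  \<comment> \<open>The block is long, so it has a second column, and only block starts lie in \<open>S\<close>\<close>
  then have "1 < mult n1 n3 t" using assms(3) by linarith
  then have c: "bstart n1 n3 t + 1 \<in> {1..n3}" "blk n1 n3 (bstart n1 n3 t + 1) = t"
    using bstart_add_column[of n1 t 1 n3] assms(1,5) by auto
  have "bstart n1 n3 t + 1 \<notin> Sset n1 n2 n3"
  proof
    assume "bstart n1 n3 t + 1 \<in> Sset n1 n2 n3"
    then obtain i where i: "i \<in> {1..n1}" "bstart n1 n3 t + 1 = bstart n1 n3 i"
      using Sset_block_starts assms(4) by metis
    then have "i = t" using c(2) bstart_column[OF assms(1,2) i(1)] by simp
    with i(2) show False by simp
  qed
  with c show ?thesis by blast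
next
  case False
  have "bstart n1 n3 t \<notin> Sset n1 n2 n3"
  proof
    assume "bstart n1 n3 t \<in> Sset n1 n2 n3"
    then obtain i where i: "i \<in> {1..n1}" "(n2 - 1) div 2 < mult n1 n3 i"
      "bstart n1 n3 t = bstart n1 n3 i"
      using Sset_block_starts assms(4) by metis
    then have "i = t" using bstart_column[OF assms(1,2) i(1)] bstart_column[OF assms(1,2,5)] by simp
    with i(2) False show False by simp
  qed
  then show ?thesis using bstart_column[OF assms(1,2,5)] by blast
qed

lemma blocks_avoid_yL_odd:
  assumes "3 \<le> n1" "n1 \<le> n3" "3 \<le> n2" "2 \<le> kcnt n1 n2 n3"
  shows "blocks_avoid n1 n3 (yL_odd n1 n2 n3) n2"
  unfolding blocks_avoid_def
proof
  fix t assume "t \<in> {1, 2, n1}"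
  then have "t \<in> {1..n1}" using assms(1) by auto
  then obtain c where "c \<in> {1..n3}" "blk n1 n3 c = t" "c \<notin> Sset n1 n2 n3"
    using block_has_column_outside_Sset[of n1 n3 n2 t] assms by auto
  moreover have "yL_odd n1 n2 n3 c \<noteq> n2"
    using yL_odd_bounds[OF assms(3) \<open>c \<notin> Sset n1 n2 n3\<close>] by auto
  ultimately show "\<exists>c \<in> {1..n3}. blk n1 n3 c = t \<and> yL_odd n1 n2 n3 c \<noteq> n2" by blast
qed

lemma end_bstart_add_column_avoiding:
  assumes "3 \<le> n1" "n1 < n3" "blk n1 n3 z \<notin> {1, 2, n1}" "t \<in> {1, 2, n1}"
  shows "\<exists>c \<in> {1..n3}. blk n1 n3 c = t \<and> c \<noteq> 1 \<and> c \<noteq> z"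
proof -
  have n1: "0 < n1" "n1 \<le> n3" "1 \<in> {1..n1}" using assms(1,2) by auto
  have "bstart n1 n3 1 = 1" by (simp add: bstart_def)
  then have blk1: "blk n1 n3 1 = 1" using bstart_column[OF n1] by simp
  show ?thesis
  proof (cases "t = 1")
    case True
    have "2 \<in> {1..n3} \<and> blk n1 n3 2 = 1"
      using bstart_add_column[of n1 1 1 n3] mult_first_ge_2[OF n1(1) assms(2)] n1 \<open>bstart n1 n3 1 = 1\<close>
      by (simp add: numeral_2_eq_2)
    then show ?thesis using True assms(3) by auto
  next
    case False
    then have "t \<in> {1..n1}" using assms(1,4) by auto
    then have "bstart n1 n3 t \<in> {1..n3}" "blk n1 n3 (bstart n1 n3 t) = t"
      using bstart_column[OF n1(1,2)] by simp_all
    moreover have "bstart n1 n3 t \<noteq> 1" "bstart n1 n3 t \<noteq> z"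
      using calculation(2) False blk1 assms(3,4) by auto
    ultimately show ?thesis by blast
  qed
qed

lemma blocks_avoid_yL_odd_update:
  assumes "3 \<le> n1" "n1 < n3" "3 \<le> n2" "\<not> 2 \<le> kcnt n1 n2 n3" "blk n1 n3 z \<notin> {1, 2, n1}"
  shows "blocks_avoid n1 n3 ((yL_odd n1 n2 n3)(z := n2)) n2"
  unfolding blocks_avoid_def
proof
  fix t assume "t \<in> {1, 2, n1}"
  then obtain c where c: "c \<in> {1..n3}" "blk n1 n3 c = t" "c \<noteq> 1" "c \<noteq> z"
    using end_bstart_add_column_avoiding assms(1,2,5) by blast
  moreover have "c \<notin> Sset n1 n2 n3" using c(3) assms(4) unfolding Sset_def by simp
  then have "yL_odd n1 n2 n3 c \<noteq> n2" using yL_odd_bounds[OF assms(3)] by fastforce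
  ultimately show "\<exists>c \<in> {1..n3}. blk n1 n3 c = t \<and> ((yL_odd n1 n2 n3)(z := n2)) c \<noteq> n2"
    by auto
qed

lemma middle_cone_landmarksE:
  assumes "3 \<le> n1" "3 \<le> n2" "n1 < n3" "middle_cone n1 n2 n3 W"
  obtains yL yR m where "W = landmarks n1 n3 yL yR" "m \<le> n2"
    "\<forall>c. yL c \<in> {1..m} \<union> {n2}" "\<forall>c. yR c \<in> {m<..n2}" "blocks_avoid n1 n3 yL n2"
proof (cases "even n2")
  case True
  let ?h = "n2 div 2"
  have h: "0 < ?h" "2 * ?h = n2" using True assms(2) by auto
  have "W = landmarks n1 n3 (yL_even n2) (yR_even n2)"
    using assms(4) True unfolding middle_cone_def by simp
  moreover have "\<forall>c. yL_even n2 c \<in> {1..?h} \<union> {n2}" "\<forall>c. yR_even n2 c \<in> {?h<..n2}"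
    using yL_even_bounds[OF h(1)] yR_even_bounds[OF h(1)] h(2) by auto
  moreover have "yL_even n2 c \<noteq> n2" for c using yL_even_bounds[OF h(1), of c] h by auto
  then have "blocks_avoid n1 n3 (yL_even n2) n2" using blocks_avoid_if_never assms(1,3) by simp
  ultimately show ?thesis using that[of _ _ ?h] by simp
next
  case odd: False
  let ?f = "(n2 - 1) div 2"
  have f: "0 < ?f" "2 * ?f < n2" using odd assms(2) by presburger+
  have yR: "\<forall>c. yR_odd n1 n2 n3 c \<in> {?f<..n2}"
  proof
    fix c show "yR_odd n1 n2 n3 c \<in> {?f<..n2}"
    proof (cases "c \<in> Suc ` Sset n1 n2 n3")
      case True
      then show ?thesis using f by (simp add: yR_odd_def)
    next
      case False
      then show ?thesis using yR_odd_bounds[OF assms(2) False] f by auto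
    qed
  qed
  have yL: "\<forall>c. yL_odd n1 n2 n3 c \<in> {1..?f} \<union> {n2}"
    using yL_odd_bounds[OF assms(2)] by (simp add: yL_odd_def)
  show ?thesis
  proof (cases "2 \<le> kcnt n1 n2 n3")
    case True
    have "W = landmarks n1 n3 (yL_odd n1 n2 n3) (yR_odd n1 n2 n3)"
      using assms(4) odd True unfolding middle_cone_def by simp
    moreover have "blocks_avoid n1 n3 (yL_odd n1 n2 n3) n2"
      using blocks_avoid_yL_odd assms(1-3) True by simp
    ultimately show ?thesis using that[of _ _ ?f] yL yR f by simp
  next
    case False
    then obtain z where z: "blk n1 n3 z \<notin> {1, 2, n1}"
      and W: "W = landmarks n1 n3 ((yL_odd n1 n2 n3)(z := n2)) (yR_odd n1 n2 n3)"
      using assms(4) odd unfolding middle_cone_def by auto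
    have "\<forall>c. ((yL_odd n1 n2 n3)(z := n2)) c \<in> {1..?f} \<union> {n2}" using yL by simp
    then show ?thesis
      using that[OF W, of ?f] yR f blocks_avoid_yL_odd_update[OF assms(1,3,2) False z] by simp
  qed
qed

theorem mainTheorem11:
  fixes n1 n2 n3 :: nat and W :: "vtx set"
  assumes "3 \<le> n1" and "3 \<le> n2" and "n1 \<le> n3" and "n2 \<le> n3"
    and "3 * max n1 n2 \<le> 2 * n3" and "2 * n3 \<le> n1 * n2"
    and "middle_cone n1 n2 n3 W"
  shows "total_dom n1 n2 n3 W \<and>
         total_dom (n1 + 1) (n2 + 1) (n3 + 1) (insert (n1 + 1, n2 + 1, n3 + 1) W)"
proof -
  have "n1 < n3" using assms(1,5) by simp
  then obtain yL yR m where "W = landmarks n1 n3 yL yR" "m \<le> n2"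
    "\<forall>c. yL c \<in> {1..m} \<union> {n2}" "\<forall>c. yR c \<in> {m<..n2}" "blocks_avoid n1 n3 yL n2"
    using middle_cone_landmarksE[OF assms(1,2) _ assms(7)] by blast
  then have "total_dom n1 n2 n3 W" using landmarks_total_dom assms(1,3) by blast
  moreover have "total_dom (n1 + 1) (n2 + 1) (n3 + 1) (insert (n1 + 1, n2 + 1, n3 + 1) W)"
    using total_dom_insert_corner[OF calculation] assms(1-3) by simp
  ultimately show ?thesis ..
qed

end
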